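(* Assume $\sigma:=\sup_{g\in\mathcal G}S(g)<\infty$. For any probability measure $Q$ on $\mathcal G$, any finite Borel partition $\mathcal A$ of $\mathcal M$, and any $g,g'\in\mathcal G$, $$\bigl|\hat S_{Q,\mathcal A}(g)-\hat S_{Q,\mathcal A}(g')\bigr|\le\sigma\bigl(g(\mathcal M)+g'(\mathcal M)\bigr).$$
   Context: $\mathcal M$ is a complete separable metric space; $\mathcal G$ the finite integer-valued Borel measures on $\mathcal M$; $S:\mathcal G\to\mathbb R_+$ Borel; $n$ a positive integer. $g_A(B):=g(B\cap A)$; $X$ is the canonical random element of $\mathcal G$ and $Q[\cdot\mid X_A=g_A]$ a regular conditional distribution. $\hat S_{Q,\mathcal A}(g):=-n\sum_{A\in\mathcal A}\bigl(\log Q[e^{-S(X)/n}\mid X_A=g_A]-\log Q[e^{-S(X)/n}]\bigr)$. *)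

theory Defs
  imports "HOL-Probability.Probability"
begin

definition Gset :: "'m::topological_space measure set" where
  "Gset = {g. sets g = sets borel \<and> finite_measure g \<and>
              (\<forall>B\<in>sets borel. \<exists>k::nat. emeasure g B = of_nat k)}"

definition Gmeas :: "'m::topological_space measure measure" where
  "Gmeas = (SUP B \<in> sets (borel :: 'm measure). vimage_algebra Gset (\<lambda>g. emeasure g B) borel)"

definition restr :: "'m::topological_space set \<Rightarrow> 'm measure \<Rightarrow> 'm measure" where
  "restr A g = measure_of (space g) (sets g) (\<lambda>B. emeasure g (B \<inter> A))"

text \<open>K is a regular conditional distribution of the canonical X under Q given X_A:
  a probability kernel from (values of) X_A to G with
  Q(X in E, X_A in F) = integral over {X_A in F} of K(X_A)(E) dQ.\<close>
definition is_rcd :: "'m::topological_space measure measure \<Rightarrow> 'm set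
    \<Rightarrow> ('m measure \<Rightarrow> 'm measure measure) \<Rightarrow> bool" where
  "is_rcd Q A K \<longleftrightarrow>
     K \<in> Gmeas \<rightarrow>\<^sub>M prob_algebra Gmeas \<and>
     (\<forall>E\<in>sets Gmeas. \<forall>F\<in>sets Gmeas.
        emeasure Q {g\<in>space Q. g \<in> E \<and> restr A g \<in> F} =
        (\<integral>\<^sup>+ g. indicator F (restr A g) * emeasure (K (restr A g)) E \<partial>Q))"

text \<open>S-hat_{Q,A}(g), with K A the chosen regular conditional distribution given X_A.\<close>
definition Shat :: "nat \<Rightarrow> ('m::topological_space measure \<Rightarrow> real) \<Rightarrow> 'm measure measure
    \<Rightarrow> ('m set \<Rightarrow> 'm measure \<Rightarrow> 'm measure measure) \<Rightarrow> 'm set set \<Rightarrow> 'm measure \<Rightarrow> real" where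
  "Shat n S Q K \<A> g = - real n * (\<Sum>A\<in>\<A>.
      ln (\<integral>x. exp (- S x / real n) \<partial>(K A (restr A g))) - ln (\<integral>x. exp (- S x / real n) \<partial>Q))"

end

theory Submission
  imports Defs
begin

text \<open>Since \<open>exp (-S/n)\<close> takes values in \<open>[exp (-\<sigma>/n), 1]\<close>, each term
  \<open>log Q[exp (-S(X)/n) | X_A = g_A]\<close> lies in \<open>[-\<sigma>/n, 0]\<close>. The term for a cell \<open>A\<close> depends
  on \<open>g\<close> only through \<open>g_A\<close>, which is the zero measure when \<open>g(A) = 0\<close>; so the terms for
  \<open>g\<close> and \<open>g'\<close> can differ only on cells charged by \<open>g\<close> or \<open>g'\<close>. As the measures are
  integer-valued, each charged cell carries mass at least 1, so there are at most
  \<open>g(M) + g'(M)\<close> of them.\<close>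

lemma space_Gmeas: "space (Gmeas :: 'm::topological_space measure measure) = Gset"
  unfolding Gmeas_def space_Sup_eq_UN by auto

lemma restr_eq_density:
  assumes "A \<in> sets g"
  shows "restr A g = density g (indicator A)"
proof -
  have "restr A g = measure_of (space g) (sets g) (emeasure (density g (indicator A)))"
    unfolding restr_def
    by (rule measure_of_eq)
      (auto simp: sets.space_closed sets.sigma_sets_eq emeasure_restricted[OF assms] Int_commute)
  then show ?thesis
    using measure_of_of_measure[of "density g (indicator A)"] by simp
qed

lemma restr_null:
  assumes "A \<in> sets g" "emeasure g A = 0"
  shows "restr A g = null_measure g"
  unfolding restr_def null_measure_def
proof (rule measure_of_eq)
  fix B assume "B \<in> sigma_sets (space g) (sets g)"
  then have "B \<inter> A \<in> sets g" using assms(1) by (simp add: sets.sigma_sets_eq)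
  then show "emeasure g (B \<inter> A) = 0"
    using emeasure_mono[of "B \<inter> A" A g] assms by simp
qed (rule sets.space_closed)

lemma restr_in_Gset:
  assumes "A \<in> sets borel" "g \<in> Gset"
  shows "restr A g \<in> Gset"
proof -
  have sets_g: "sets g = sets borel" and "finite_measure g"
    and integral_g: "\<forall>B\<in>sets borel. \<exists>k::nat. emeasure g B = of_nat k"
    using assms(2) by (auto simp: Gset_def)
  have A: "A \<in> sets g" using assms(1) sets_g by simp
  have space_g: "space g = UNIV" using sets_eq_imp_space_eq[OF sets_g] by simp
  have emeasure_restr: "emeasure (restr A g) B = emeasure g (A \<inter> B)" if "B \<in> sets borel" for B
    using that sets_g by (simp add: restr_eq_density[OF A] emeasure_restricted[OF A])
  have "emeasure (restr A g) (space (restr A g)) \<noteq> \<infinity>"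
    using emeasure_restr[of UNIV] \<open>finite_measure g\<close> space_g
    by (simp add: restr_eq_density[OF A] finite_measure.emeasure_finite)
  moreover have "sets (restr A g) = sets borel"
    using sets_g by (simp add: restr_eq_density[OF A])
  moreover have "\<forall>B\<in>sets borel. \<exists>k::nat. emeasure (restr A g) B = of_nat k"
    using emeasure_restr integral_g assms(1) by auto
  ultimately show ?thesis by (simp add: Gset_def finite_measureI)
qed

lemma card_charged_le_measure_space:
  fixes \<A> :: "'a set set"
  assumes "finite_measure g" "finite \<A>" "disjoint \<A>" "\<A> \<subseteq> sets g"
    and integral: "\<forall>A\<in>\<A>. \<exists>k::nat. emeasure g A = of_nat k"
  shows "real (card {A\<in>\<A>. emeasure g A \<noteq> 0}) \<le> measure g (space g)"
proof -
  interpret finite_measure g by fact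
  define C where "C = {A\<in>\<A>. emeasure g A \<noteq> 0}"
  have C: "finite C" "C \<subseteq> sets g" "disjoint C"
    using assms(2,4) pairwise_subset[OF assms(3)] by (auto simp: C_def)
  have "1 \<le> measure g A" if "A \<in> C" for A
  proof -
    have "A \<in> \<A>" "emeasure g A \<noteq> 0" using that by (auto simp: C_def)
    then obtain k :: nat where "emeasure g A = of_nat k" "k \<noteq> 0"
      using integral by force
    then show ?thesis by (simp add: measure_def)
  qed
  then have "real (card C) \<le> (\<Sum>A\<in>C. measure g A)"
    using sum_mono[of C "\<lambda>_. 1" "measure g"] by simp
  also have "\<dots> = measure g (\<Union>C)"
    using C by (intro measure_Union'[symmetric]) (auto simp: fmeasurable_eq_sets)
  also have "\<dots> \<le> measure g (space g)"
    using C by (intro finite_measure_mono) (auto dest: sets.sets_into_space)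
  finally show ?thesis by (simp add: C_def)
qed

lemma card_charged_le_measure_UNIV:
  assumes "g \<in> Gset" "finite \<A>" "disjoint \<A>" "\<A> \<subseteq> sets borel"
  shows "real (card {A\<in>\<A>. emeasure g A \<noteq> 0}) \<le> measure g UNIV"
proof -
  have sets_g: "sets g = sets borel" and "finite_measure g"
    and integral: "\<forall>A\<in>\<A>. \<exists>k::nat. emeasure g A = of_nat k"
    using assms(1,4) by (auto simp: Gset_def)
  have "space g = UNIV"
    using sets_eq_imp_space_eq[OF sets_g] by simp
  then show ?thesis
    using card_charged_le_measure_space[OF \<open>finite_measure g\<close> assms(2,3) _ integral] assms(4) sets_g
    by simp
qed

lemma is_rcd_kernel_prob_space:
  assumes "is_rcd Q A K" "h \<in> Gset"
  shows "prob_space (K h)" "sets (K h) = sets Gmeas"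
proof -
  have "K \<in> Gmeas \<rightarrow>\<^sub>M prob_algebra Gmeas" using assms(1) by (simp add: is_rcd_def)
  then have "K h \<in> space (prob_algebra Gmeas)"
    using assms(2) by (simp add: measurable_space space_Gmeas)
  then show "prob_space (K h)" "sets (K h) = sets Gmeas"
    by (auto simp: space_prob_algebra)
qed

lemma ln_integral_exp_neg_div_bounds:
  fixes f :: "'a \<Rightarrow> real"
  assumes "prob_space M" "f \<in> borel_measurable M" "t > 0"
    and bounds: "\<forall>x\<in>space M. 0 \<le> f x \<and> f x \<le> c"
  shows "- c / t \<le> ln (\<integral>x. exp (- f x / t) \<partial>M)" "ln (\<integral>x. exp (- f x / t) \<partial>M) \<le> 0"
proof -
  interpret prob_space M by fact
  have exp_bounds: "exp (- c / t) \<le> exp (- f x / t) \<and> exp (- f x / t) \<le> 1"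
    if "x \<in> space M" for x
    using bounds that \<open>t > 0\<close> by (auto simp: divide_right_mono)
  have "integrable M (\<lambda>x. exp (- f x / t))"
    using exp_bounds assms(2) by (intro integrable_const_bound[where B = 1]) auto
  then have "exp (- c / t) \<le> (\<integral>x. exp (- f x / t) \<partial>M)" "(\<integral>x. exp (- f x / t) \<partial>M) \<le> 1"
    using exp_bounds by (auto intro: integral_ge_const integral_le_const)
  moreover from this(1) have "0 < (\<integral>x. exp (- f x / t) \<partial>M)"
    using exp_gt_zero[of "- c / t"] by linarith
  ultimately show "- c / t \<le> ln (\<integral>x. exp (- f x / t) \<partial>M)" "ln (\<integral>x. exp (- f x / t) \<partial>M) \<le> 0"
    by (simp_all add: ln_ge_iff)
qed

text \<open>\<open>log_cond_laplace n S K A g\<close> is the paper's \<open>log Q[exp (-S(X)/n) | X_A = g_A]\<close>,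
  with the conditional distribution given by the kernel \<open>K A\<close>.\<close>
definition log_cond_laplace ::
    "nat \<Rightarrow> ('m::topological_space measure \<Rightarrow> real) \<Rightarrow> ('m set \<Rightarrow> 'm measure \<Rightarrow> 'm measure measure)
      \<Rightarrow> 'm set \<Rightarrow> 'm measure \<Rightarrow> real" where
  "log_cond_laplace n S K A g = ln (\<integral>x. exp (- S x / real n) \<partial>(K A (restr A g)))"

lemma Shat_diff_eq_sum:
  "Shat n S Q K \<A> g - Shat n S Q K \<A> g' =
     - real n * (\<Sum>A\<in>\<A>. log_cond_laplace n S K A g - log_cond_laplace n S K A g')"
  by (simp add: Shat_def log_cond_laplace_def sum_subtractf algebra_simps)

lemma log_cond_laplace_bounds:
  assumes "n > 0" "S \<in> borel_measurable Gmeas" "\<forall>h\<in>Gset. 0 \<le> S h \<and> S h \<le> \<sigma>"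
    and "is_rcd Q A (K A)" "A \<in> sets borel" "h \<in> Gset"
  shows "- \<sigma> / real n \<le> log_cond_laplace n S K A h" "log_cond_laplace n S K A h \<le> 0"
proof -
  have "restr A h \<in> Gset" using assms(5,6) by (rule restr_in_Gset)
  note kernel = is_rcd_kernel_prob_space[OF assms(4) this]
  have "space (K A (restr A h)) = Gset"
    using sets_eq_imp_space_eq[OF kernel(2)] by (simp add: space_Gmeas)
  then show "- \<sigma> / real n \<le> log_cond_laplace n S K A h" "log_cond_laplace n S K A h \<le> 0"
    using ln_integral_exp_neg_div_bounds[OF kernel(1), of S "real n" \<sigma>] assms(1-3) kernel(2)
    by (simp_all add: log_cond_laplace_def measurable_cong_sets[OF kernel(2) refl])
qed

lemma log_cond_laplace_eq_if_null:
  assumes "A \<in> sets borel" "g \<in> Gset" "g' \<in> Gset" "emeasure g A = 0" "emeasure g' A = 0"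
  shows "log_cond_laplace n S K A g = log_cond_laplace n S K A g'"
proof -
  have "sets g = sets borel" "sets g' = sets borel" using assms(2,3) by (auto simp: Gset_def)
  then have "restr A g = restr A g'"
    using assms(1,4,5) sets_eq_imp_space_eq[of g g'] by (simp add: restr_null null_measure_def)
  then show ?thesis by (simp add: log_cond_laplace_def)
qed

lemma abs_sum_le_card_support_mult:
  fixes d :: "'a \<Rightarrow> 'b::linordered_idom"
  assumes "finite I" "B \<subseteq> I" "\<And>i. i \<in> I - B \<Longrightarrow> d i = 0" "\<And>i. i \<in> B \<Longrightarrow> \<bar>d i\<bar> \<le> b"
  shows "\<bar>\<Sum>i\<in>I. d i\<bar> \<le> of_nat (card B) * b"
proof -
  have "\<bar>\<Sum>i\<in>I. d i\<bar> = \<bar>\<Sum>i\<in>B. d i\<bar>"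
    using assms(1-3) by (simp add: sum.mono_neutral_right)
  also have "\<dots> \<le> (\<Sum>i\<in>B. \<bar>d i\<bar>)" by (rule sum_abs)
  also have "\<dots> \<le> of_nat (card B) * b" using assms(4) by (rule sum_bounded_above)
  finally show ?thesis .
qed

lemma abs_Shat_diff_le_card_charged:
  assumes "n > 0" "S \<in> borel_measurable Gmeas" "\<forall>h\<in>Gset. 0 \<le> S h \<and> S h \<le> \<sigma>"
    and "finite \<A>" "\<A> \<subseteq> sets borel" "\<forall>A\<in>\<A>. is_rcd Q A (K A)"
    and "g \<in> Gset" "g' \<in> Gset"
  shows "\<bar>Shat n S Q K \<A> g - Shat n S Q K \<A> g'\<bar>
           \<le> real (card ({A\<in>\<A>. emeasure g A \<noteq> 0} \<union> {A\<in>\<A>. emeasure g' A \<noteq> 0})) * \<sigma>"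
proof -
  define d where "d A = log_cond_laplace n S K A g - log_cond_laplace n S K A g'" for A
  have "\<bar>d A\<bar> \<le> \<sigma> / real n" if "A \<in> \<A>" for A
  proof -
    have "is_rcd Q A (K A)" "A \<in> sets borel" using that assms(5,6) by auto
    note bounds = log_cond_laplace_bounds[where K = K, OF assms(1-3) this]
    show ?thesis
      using bounds[OF assms(7)] bounds[OF assms(8)] unfolding d_def abs_le_iff by linarith
  qed
  moreover have "d A = 0" if "A \<in> \<A> - ({A\<in>\<A>. emeasure g A \<noteq> 0} \<union> {A\<in>\<A>. emeasure g' A \<noteq> 0})" for A
    using that assms(5,7,8) by (auto simp: d_def intro: log_cond_laplace_eq_if_null)
  ultimately have "\<bar>\<Sum>A\<in>\<A>. d A\<bar>
      \<le> real (card ({A\<in>\<A>. emeasure g A \<noteq> 0} \<union> {A\<in>\<A>. emeasure g' A \<noteq> 0})) * (\<sigma> / real n)"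
    using assms(4) by (intro abs_sum_le_card_support_mult) auto
  then show ?thesis
    using assms(1) by (simp add: Shat_diff_eq_sum d_def abs_mult field_simps)
qed

theorem lemma7p3:
  fixes S :: "'m::polish_space measure \<Rightarrow> real"
    and n :: nat
    and Q :: "'m measure measure"
    and \<A> :: "'m set set"
    and K :: "'m set \<Rightarrow> 'm measure \<Rightarrow> 'm measure measure"
    and g g' :: "'m measure"
  assumes "n > 0"
    and "S \<in> borel_measurable Gmeas"
    and "\<forall>h\<in>Gset. S h \<ge> 0"
    and "bdd_above (S ` Gset)"
    and "prob_space Q" and "sets Q = sets Gmeas"
    and "finite \<A>" and "partition_on UNIV \<A>" and "\<A> \<subseteq> sets borel"
    and "\<forall>A\<in>\<A>. is_rcd Q A (K A)"
    and "g \<in> Gset" and "g' \<in> Gset"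
  shows "\<bar>Shat n S Q K \<A> g - Shat n S Q K \<A> g'\<bar>
           \<le> Sup (S ` Gset) * (measure g UNIV + measure g' UNIV)"
proof -
  define \<sigma> where "\<sigma> = Sup (S ` Gset)"
  have S_bounds: "\<forall>h\<in>Gset. 0 \<le> S h \<and> S h \<le> \<sigma>"
    using assms(3,4) by (auto simp: \<sigma>_def intro: cSup_upper)
  then have "0 \<le> \<sigma>" using assms(11) by force
  define charged where "charged h = {A\<in>\<A>. emeasure h A \<noteq> 0}" for h
  have "disjoint \<A>" using assms(8) by (simp add: partition_on_def)
  note card_charged = card_charged_le_measure_UNIV[OF _ assms(7) this assms(9), folded charged_def]
  have "real (card (charged g \<union> charged g')) \<le> measure g UNIV + measure g' UNIV"
    using card_Un_le[of "charged g" "charged g'"] card_charged[OF assms(11)] card_charged[OF assms(12)]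
    by linarith
  then have "real (card (charged g \<union> charged g')) * \<sigma> \<le> \<sigma> * (measure g UNIV + measure g' UNIV)"
    using \<open>0 \<le> \<sigma>\<close> by (simp add: mult.commute mult_left_mono)
  then show ?thesis
    using abs_Shat_diff_le_card_charged[OF assms(1,2) S_bounds assms(7,9,10-12)]
    unfolding charged_def \<sigma>_def by linarith
qed

end
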